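(* If $f\in E(S^1)$ satisfies $\operatorname{Lip}(f)<1$, then $f\in E^+(S^1)$. In particular, $E^+(S^1)$ is dense in $E(S^1)$ with respect to the sup norm.
   Context: $E(S^1)$ is the set of $1$-Lipschitz functions $f:\mathbb{R}\to\mathbb{R}$ (write $f_\alpha=f(\alpha)$) with $f_{\alpha+\pi}+f_\alpha=\pi$ for all $\alpha$, equipped with the sup norm. $S^1\subset E(S^1)$ is the set of functions $\alpha\mapsto\arccos(\cos(\alpha-\tau))$, $\tau\in\mathbb{R}$. Elements of $E(S^1)\setminus S^1$ take values in $(0,\pi)$. For such $f$ and $\beta-\alpha\notin\pi\mathbb{Z}$, \[ p_{\alpha,\beta}(f)=\frac{1-\cos(\beta-\alpha)^2-\cos(f_\alpha)^2-\cos(f_\beta)^2+2\cos(\beta-\alpha)\cos(f_\alpha)\cos(f_\beta)}{\sin(\beta-\alpha)^2\sin(f_\alpha)^2\sin(f_\beta)^2}. \] $E^+(S^1)$ denotes the set of $f\in E(S^1)\setminus S^1$ with $p_{\alpha,\beta}(f)>0$ for all $\alpha,\beta$ with $\alpha\ne\beta$ mod $\pi$. *)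

theory Defs
  imports "HOL-Analysis.Analysis"
begin

definition E_S1 :: "(real \<Rightarrow> real) set" where
  "E_S1 = {f. 1-lipschitz_on UNIV f \<and> (\<forall>\<alpha>. f (\<alpha> + pi) + f \<alpha> = pi)}"

definition S1 :: "(real \<Rightarrow> real) set" where
  "S1 = {f. \<exists>\<tau>::real. f = (\<lambda>\<alpha>. arccos (cos (\<alpha> - \<tau>)))}"

definition p_ab :: "real \<Rightarrow> real \<Rightarrow> (real \<Rightarrow> real) \<Rightarrow> real" where
  "p_ab \<alpha> \<beta> f =
     (1 - (cos (\<beta> - \<alpha>))^2 - (cos (f \<alpha>))^2 - (cos (f \<beta>))^2
        + 2 * cos (\<beta> - \<alpha>) * cos (f \<alpha>) * cos (f \<beta>))
     / ((sin (\<beta> - \<alpha>))^2 * (sin (f \<alpha>))^2 * (sin (f \<beta>))^2)"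

definition E_plus :: "(real \<Rightarrow> real) set" where
  "E_plus = {f \<in> E_S1 - S1. \<forall>\<alpha> \<beta>. (\<forall>k::int. \<beta> - \<alpha> \<noteq> of_int k * pi) \<longrightarrow> p_ab \<alpha> \<beta> f > 0}"

end

theory Submission
  imports Defs "HOL-Library.Periodic_Fun"
begin

text \<open>
  For a 2\<pi>-periodic f with Lipschitz constant C < 1, \<bar>f(a + d) - f(a)\<bar> is at most C times
  the distance from d to 2\<pi>\<int>, hence strictly smaller unless d \<in> 2\<pi>\<int>, so
  cos (f(a + d) - f(a)) > cos d. Taking d = \<beta> - \<alpha>, and d = \<beta> - \<alpha> + \<pi> together with
  f(\<beta> + \<pi>) = \<pi> - f(\<beta>), gives cos (f \<alpha> + f \<beta>) < cos (\<beta> - \<alpha>) < cos (f \<beta> - f \<alpha>),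
  and the numerator of p_ab is the product of these two gaps. For density, contracting f
  towards the constant \<pi>/2 by a factor t < 1 moves it by at most (1 - t)\<pi>/2 in sup norm.
\<close>

definition antipodal :: "(real \<Rightarrow> real) \<Rightarrow> bool" where
  "antipodal f \<longleftrightarrow> (\<forall>\<alpha>. f (\<alpha> + pi) + f \<alpha> = pi)"

lemma E_S1_iff: "f \<in> E_S1 \<longleftrightarrow> 1-lipschitz_on UNIV f \<and> antipodal f"
  by (simp add: E_S1_def antipodal_def)

lemma antipodal_plus_pi: "antipodal f \<Longrightarrow> f (x + pi) = pi - f x"
  unfolding antipodal_def by (metis add_diff_cancel_right')

lemma antipodal_periodic: "antipodal f \<Longrightarrow> f (x + 2 * pi) = f x"
  using antipodal_plus_pi[of f x] antipodal_plus_pi[of f "x + pi"]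
  by (simp add: add.assoc)

lemma periodic_lipschitz_cos_less:
  fixes f :: "real \<Rightarrow> real"
  assumes periodic: "\<And>x. f (x + 2 * pi) = f x"
    and lip: "C-lipschitz_on UNIV f" and "C < 1" and "cos d \<noteq> 1"
  shows "cos d < cos (f (a + d) - f a)"
proof -
  interpret periodic_fun_simple f "2 * pi"
    by standard (rule periodic)
  obtain k where r_eq: "arccos (cos d) = \<bar>d - of_int k * (2 * pi)\<bar>"
    using arccos_cos_eq_abs_2pi .
  define r where "r = arccos (cos d)"
  have cos_r: "cos r = cos d"
    unfolding r_def by (simp add: cos_arccos_abs)
  have "0 \<le> r" "r \<le> pi"
    unfolding r_def by (simp_all add: arccos_lbound arccos_ubound)
  moreover have "r \<noteq> 0"
    using cos_r \<open>cos d \<noteq> 1\<close> by auto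
  ultimately have r: "0 < r" "r \<le> pi"
    by simp_all
  have "f (a + d) = f ((a + (d - of_int k * (2 * pi))) + of_int k * (2 * pi))"
    by simp
  also have "\<dots> = f (a + (d - of_int k * (2 * pi)))"
    by (rule plus_of_int)
  finally have "\<bar>f (a + d) - f a\<bar> \<le> C * r"
    using lipschitz_onD[OF lip, of "a + (d - of_int k * (2 * pi))" a] r_eq
    by (simp add: r_def dist_real_def)
  also have "\<dots> < r"
    using \<open>C < 1\<close> r by simp
  finally have "cos r < cos \<bar>f (a + d) - f a\<bar>"
    using r by (intro cos_monotone_0_pi) auto
  then show ?thesis
    using cos_r by simp
qed

lemma antipodal_lipschitz_abs_le:
  assumes "antipodal f" and "C-lipschitz_on UNIV f"
  shows "\<bar>f x - pi / 2\<bar> \<le> C * pi / 2"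
proof -
  have "\<bar>f (x + pi) - f x\<bar> \<le> C * pi"
    using lipschitz_onD[OF assms(2), of "x + pi" x] by (simp add: dist_real_def)
  moreover have "f (x + pi) - f x = - 2 * (f x - pi / 2)"
    using antipodal_plus_pi[OF assms(1), of x] by simp
  then have "\<bar>f (x + pi) - f x\<bar> = 2 * \<bar>f x - pi / 2\<bar>"
    by (simp only: abs_mult abs_minus)
  ultimately show ?thesis
    by simp
qed

lemma antipodal_lipschitz_less_one_bounds:
  assumes "antipodal f" and "C-lipschitz_on UNIV f" and "C < 1"
  shows "0 < f x" "f x < pi"
proof -
  have "C * pi / 2 < pi / 2"
    using \<open>C < 1\<close> by simp
  moreover have "\<bar>f x - pi / 2\<bar> \<le> C * pi / 2"
    by (rule antipodal_lipschitz_abs_le[OF assms(1,2)])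
  ultimately show "0 < f x" "f x < pi"
    unfolding abs_le_iff by linarith+
qed

lemma antipodal_lipschitz_cos_bounds:
  assumes "antipodal f" and lip: "C-lipschitz_on UNIV f" and "C < 1" and "sin (\<beta> - \<alpha>) \<noteq> 0"
  shows "cos (f \<alpha> + f \<beta>) < cos (\<beta> - \<alpha>)" "cos (\<beta> - \<alpha>) < cos (f \<beta> - f \<alpha>)"
proof -
  have "\<bar>cos (\<beta> - \<alpha>)\<bar> \<noteq> 1"
    using \<open>sin (\<beta> - \<alpha>) \<noteq> 0\<close> sin_cos_squared_add[of "\<beta> - \<alpha>"]
    by (auto simp: abs_if power2_eq_square)
  then have cos_ne: "cos (\<beta> - \<alpha>) \<noteq> 1" "cos (\<beta> - \<alpha> + pi) \<noteq> 1"
    by auto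
  note cos_less =
    periodic_lipschitz_cos_less[OF antipodal_periodic[OF \<open>antipodal f\<close>] lip \<open>C < 1\<close>]
  show "cos (\<beta> - \<alpha>) < cos (f \<beta> - f \<alpha>)"
    using cos_less[OF cos_ne(1), of \<alpha>] by simp
  have "cos (\<beta> - \<alpha> + pi) < cos (f (\<beta> + pi) - f \<alpha>)"
    using cos_less[OF cos_ne(2), of \<alpha>] by (simp add: add.assoc)
  then show "cos (f \<alpha> + f \<beta>) < cos (\<beta> - \<alpha>)"
    using antipodal_plus_pi[OF \<open>antipodal f\<close>, of \<beta>] by (simp add: diff_diff_add add.commute)
qed

lemma p_ab_numerator_eq:
  fixes c x y :: real
  shows "1 - c\<^sup>2 - (cos x)\<^sup>2 - (cos y)\<^sup>2 + 2 * c * cos x * cos y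
     = (cos (y - x) - c) * (c - cos (x + y))"
proof -
  have "(sin x * sin y)\<^sup>2 = (1 - (cos x)\<^sup>2) * (1 - (cos y)\<^sup>2)"
    by (simp add: power_mult_distrib sin_squared_eq)
  then show ?thesis
    by (simp add: cos_diff cos_add power2_eq_square algebra_simps)
qed

lemma E_plus_if_lipschitz_less_one:
  assumes "f \<in> E_S1" and "C < 1" and lip: "C-lipschitz_on UNIV f"
  shows "f \<in> E_plus"
proof -
  have "antipodal f"
    using \<open>f \<in> E_S1\<close> by (simp add: E_S1_iff)
  note bounds = antipodal_lipschitz_less_one_bounds[OF this lip \<open>C < 1\<close>]
  have "f \<notin> S1"
  proof
    assume "f \<in> S1"
    then obtain \<tau> where "f = (\<lambda>\<alpha>. arccos (cos (\<alpha> - \<tau>)))"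
      by (auto simp: S1_def)
    then have "f \<tau> = 0"
      by simp
    with bounds(1)[of \<tau>] show False
      by simp
  qed
  moreover have "p_ab \<alpha> \<beta> f > 0" if "\<forall>k::int. \<beta> - \<alpha> \<noteq> of_int k * pi" for \<alpha> \<beta>
  proof -
    have "sin (\<beta> - \<alpha>) \<noteq> 0"
      using that by (auto simp: sin_zero_iff_int2)
    note cos_bounds = antipodal_lipschitz_cos_bounds[OF \<open>antipodal f\<close> lip \<open>C < 1\<close> this]
    have "sin (f \<alpha>) > 0" "sin (f \<beta>) > 0"
      using bounds by (simp_all add: sin_gt_zero)
    with \<open>sin (\<beta> - \<alpha>) \<noteq> 0\<close> cos_bounds show ?thesis
      unfolding p_ab_def p_ab_numerator_eq by simp
  qed
  ultimately show ?thesis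
    using \<open>f \<in> E_S1\<close> by (simp add: E_plus_def)
qed

definition shrink_about_half_pi :: "real \<Rightarrow> (real \<Rightarrow> real) \<Rightarrow> real \<Rightarrow> real" where
  "shrink_about_half_pi t f = (\<lambda>x. t * f x + (1 - t) * (pi / 2))"

lemma lipschitz_on_shrink_about_half_pi:
  assumes "C-lipschitz_on UNIV f" and "0 \<le> t"
  shows "(t * C)-lipschitz_on UNIV (shrink_about_half_pi t f)"
  using lipschitz_on_add[OF lipschitz_on_cmult_real_nonneg[OF assms] lipschitz_on_constant]
  by (simp add: shrink_about_half_pi_def)

lemma antipodal_shrink_about_half_pi:
  "antipodal f \<Longrightarrow> antipodal (shrink_about_half_pi t f)"
  unfolding antipodal_def shrink_about_half_pi_def
  by (simp add: algebra_simps flip: distrib_left)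

lemma shrink_about_half_pi_in_E_S1:
  assumes "f \<in> E_S1" and "0 \<le> t" "t \<le> 1"
  shows "shrink_about_half_pi t f \<in> E_S1"
  using assms lipschitz_on_shrink_about_half_pi[of 1 f t] antipodal_shrink_about_half_pi[of f t]
  by (auto simp: E_S1_iff intro: lipschitz_on_le)

lemma abs_diff_shrink_about_half_pi_le:
  assumes "f \<in> E_S1" and "t \<le> 1"
  shows "\<bar>f x - shrink_about_half_pi t f x\<bar> \<le> (1 - t) * pi / 2"
proof -
  have "f x - shrink_about_half_pi t f x = (1 - t) * (f x - pi / 2)"
    by (simp add: shrink_about_half_pi_def algebra_simps)
  then have "\<bar>f x - shrink_about_half_pi t f x\<bar> = (1 - t) * \<bar>f x - pi / 2\<bar>"
    using \<open>t \<le> 1\<close> by (simp add: abs_mult)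
  also have "\<dots> \<le> (1 - t) * (pi / 2)"
    using assms antipodal_lipschitz_abs_le[of f 1 x] by (intro mult_left_mono) (auto simp: E_S1_iff)
  finally show ?thesis
    by simp
qed

theorem lemma3p3:
  shows "(\<forall>f \<in> E_S1. (\<exists>C < 1. C-lipschitz_on UNIV f) \<longrightarrow> f \<in> E_plus)
    \<and> (\<forall>f \<in> E_S1. \<forall>\<epsilon> > 0. \<exists>g \<in> E_plus. (SUP x. \<bar>f x - g x\<bar>) < \<epsilon>)"
proof (intro conjI ballI allI impI)
  show "f \<in> E_plus" if "f \<in> E_S1" and "\<exists>C < 1. C-lipschitz_on UNIV f" for f
    using that E_plus_if_lipschitz_less_one by blast
next
  fix f and \<epsilon> :: real
  assume "f \<in> E_S1" and "\<epsilon> > 0"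
  define t where "t = 1 - min 1 (\<epsilon> / pi)"
  have t: "0 \<le> t" "t < 1"
    using \<open>\<epsilon> > 0\<close> by (auto simp: t_def)
  let ?g = "shrink_about_half_pi t f"
  have "?g \<in> E_S1"
    using \<open>f \<in> E_S1\<close> t by (simp add: shrink_about_half_pi_in_E_S1)
  moreover have "t-lipschitz_on UNIV ?g"
    using \<open>f \<in> E_S1\<close> t lipschitz_on_shrink_about_half_pi[of 1 f t] by (simp add: E_S1_iff)
  ultimately have "?g \<in> E_plus"
    using \<open>t < 1\<close> E_plus_if_lipschitz_less_one by blast
  have "(SUP x. \<bar>f x - ?g x\<bar>) \<le> (1 - t) * pi / 2"
    using abs_diff_shrink_about_half_pi_le[OF \<open>f \<in> E_S1\<close>] t by (intro cSUP_least) auto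
  also have "\<dots> \<le> \<epsilon> / 2"
    using pi_gt_zero by (simp add: t_def min_def field_simps)
  also have "\<dots> < \<epsilon>"
    using \<open>\<epsilon> > 0\<close> by simp
  finally show "\<exists>g \<in> E_plus. (SUP x. \<bar>f x - g x\<bar>) < \<epsilon>"
    using \<open>?g \<in> E_plus\<close> by blast
qed

end
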